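(* Let $f$ be a convergent power series in $\mathbf z=(z_1,\dots,z_n)$ with $f(\mathbf 0)=0$, let $P,Q$ be strictly positive weight vectors with normalized weights $\hat P=P/d(P,f)=(\hat p_1,\dots,\hat p_n)$, $\hat Q=Q/d(Q,f)=(\hat q_1,\dots,\hat q_n)$, and for $0\le s\le1$ let $\hat R_s=s\hat P+(1-s)\hat Q=(\hat r_{s,1},\dots,\hat r_{s,n})$. (1) If $P,Q$ are admissible, then for all $i,j$ and $0<s<1$, $\eta_{ij}(\hat R_s)\le\max\{\eta_{ij}(\hat P),\eta_{ij}(\hat Q)\}$; in particular $\eta(\hat R_s)\le\max\{\eta(\hat P),\eta(\hat Q)\}$. (2) If $P,Q$ are $J$-admissible, then for all $i,j$ and $0<s<1$, $\eta'_{ij}(\hat R_s)\le\max\{\eta'_{ij}(\hat P),\eta'_{ij}(\hat Q)\}$.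
   Context: For a convergent power series $g=\sum c_\nu\mathbf z^\nu$, $\Gamma_+(g)$ is the convex hull of $\bigcup_{c_\nu\ne0}(\nu+\mathbb R_{\ge0}^n)$; for a weight $X=(x_1,\dots,x_n)\in\mathbb R_{\ge0}^n$, $d(X,g)=\min\{\sum x_i\nu_i:\nu\in\Gamma_+(g)\}$ and $\Delta(X,g)$ is the face where it is attained. A weight is strictly positive if all its entries are positive. $f_j=\partial f/\partial z_j$. $P,Q$ are admissible if $\Delta(P,f)\cap\Delta(Q,f)\ne\emptyset$, and $J$-admissible if moreover $\Delta(P,f_i)\cap\Delta(Q,f_i)\ne\emptyset$ for every $i$. For a strictly positive $X=(x_1,\dots,x_n)$: $\eta_{ij}(X)=(1-x_j)/x_i$, $\eta(X)=1/\min_kx_k-1$, and $\eta'_{ij}(X)=d(X,f_j)/x_i$. *)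

theory Defs
  imports "HOL-Analysis.Analysis"
begin

text \<open>A power series in variables z_k (k ranging over the finite index type 'n) is
  represented by its coefficient function c, mapping a multi-index nu to c nu.\<close>

type_synonym 'n mindex = "nat ^ 'n"
type_synonym 'n pseries = "'n mindex \<Rightarrow> complex"

definition mdeg :: "'n::finite mindex \<Rightarrow> nat" where
  "mdeg \<nu> = (\<Sum>k\<in>UNIV. \<nu> $ k)"

definition convergent_ps :: "'n::finite pseries \<Rightarrow> bool" where
  "convergent_ps c \<longleftrightarrow> (\<exists>r>0. (\<lambda>\<nu>. norm (c \<nu>) * r ^ mdeg \<nu>) summable_on UNIV)"

definition ps_support :: "'n::finite pseries \<Rightarrow> 'n mindex set" where
  "ps_support c = {\<nu>. c \<nu> \<noteq> 0}"

definition newton_poly :: "'n::finite pseries \<Rightarrow> (real ^ 'n) set" where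
  "newton_poly c = convex hull (\<Union>\<nu>\<in>ps_support c. {x. \<forall>k. real (\<nu> $ k) \<le> x $ k})"

definition wsum :: "real ^ 'n::finite \<Rightarrow> real ^ 'n \<Rightarrow> real" where
  "wsum X x = (\<Sum>k\<in>UNIV. X $ k * x $ k)"

definition dval :: "real ^ 'n::finite \<Rightarrow> 'n pseries \<Rightarrow> real" where
  "dval X c = Inf (wsum X ` newton_poly c)"

definition Delta :: "real ^ 'n::finite \<Rightarrow> 'n pseries \<Rightarrow> (real ^ 'n) set" where
  "Delta X c = {x \<in> newton_poly c. wsum X x = dval X c}"

definition ps_partial :: "'n::finite pseries \<Rightarrow> 'n \<Rightarrow> 'n pseries" where
  "ps_partial c j = (\<lambda>\<nu>. of_nat (\<nu> $ j + 1) * c (\<chi> k. if k = j then \<nu> $ k + 1 else \<nu> $ k))"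

definition strictly_pos :: "real ^ 'n::finite \<Rightarrow> bool" where
  "strictly_pos X \<longleftrightarrow> (\<forall>k. 0 < X $ k)"

definition admissible :: "'n::finite pseries \<Rightarrow> real ^ 'n \<Rightarrow> real ^ 'n \<Rightarrow> bool" where
  "admissible c P Q \<longleftrightarrow> Delta P c \<inter> Delta Q c \<noteq> {}"

definition J_admissible :: "'n::finite pseries \<Rightarrow> real ^ 'n \<Rightarrow> real ^ 'n \<Rightarrow> bool" where
  "J_admissible c P Q \<longleftrightarrow> admissible c P Q \<and>
     (\<forall>i. Delta P (ps_partial c i) \<inter> Delta Q (ps_partial c i) \<noteq> {})"

definition eta_ij :: "real ^ 'n::finite \<Rightarrow> 'n \<Rightarrow> 'n \<Rightarrow> real" where
  "eta_ij X i j = (1 - X $ j) / X $ i"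

definition eta :: "real ^ 'n::finite \<Rightarrow> real" where
  "eta X = 1 / Min (range (\<lambda>k. X $ k)) - 1"

definition eta'_ij :: "'n::finite pseries \<Rightarrow> real ^ 'n \<Rightarrow> 'n \<Rightarrow> 'n \<Rightarrow> real" where
  "eta'_ij c X i j = dval X (ps_partial c j) / X $ i"

definition normw :: "real ^ 'n::finite \<Rightarrow> 'n pseries \<Rightarrow> real ^ 'n" where
  "normw X c = (1 / dval X c) *\<^sub>R X"

end

theory Submission
  imports Defs
begin

text \<open>All three estimates come from the mediant inequality
  (s a + (1 - s) b) / (s c + (1 - s) d) \<le> max (a / c) (b / d) for c, d > 0.
  The denominators are the i-th coordinates of the normalized weights, which are positive
  because d(P, f) > 0 when f(0) = 0. For \<eta>_ij the numerator 1 - r_j is affine in s.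
  For \<eta>'_ij it is affine as well: a common point of \<Delta>(P, f_j) and \<Delta>(Q, f_j) minimizes
  every nonnegative combination of P and Q on \<Gamma>_+(f_j), so d(-, f_j) is affine along the
  segment from P/d(P,f) to Q/d(Q,f).\<close>

lemma wsum_eq_inner: "wsum X x = X \<bullet> x"
  by (simp add: wsum_def inner_vec_def)

lemma newton_poly_nonneg:
  assumes "x \<in> newton_poly g"
  shows "0 \<le> x $ k"
proof -
  have "newton_poly g \<subseteq> {x. \<forall>k. 0 \<le> x $ k}"
    unfolding newton_poly_def
  proof (rule hull_minimal)
    show "(\<Union>\<nu>\<in>ps_support g. {x. \<forall>k. real (\<nu> $ k) \<le> x $ k}) \<subseteq> {x. \<forall>k. 0 \<le> x $ k}"
      using of_nat_0_le_iff order_trans by blast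
    show "convex {x::real^'a. \<forall>k. 0 \<le> x $ k}"
      unfolding convex_def by (auto intro!: add_nonneg_nonneg mult_nonneg_nonneg)
  qed
  with assms show ?thesis by auto
qed

lemma wsum_nonneg_on_newton_poly:
  assumes "x \<in> newton_poly g" "strictly_pos X"
  shows "0 \<le> wsum X x"
  using assms(2) newton_poly_nonneg[OF assms(1)] unfolding wsum_def strictly_pos_def
  by (intro sum_nonneg mult_nonneg_nonneg) (auto intro: less_imp_le)

lemma Delta_minimal:
  assumes "y \<in> Delta X g" "strictly_pos X" "x \<in> newton_poly g"
  shows "wsum X y \<le> wsum X x"
proof -
  have "bdd_below (wsum X ` newton_poly g)"
    using wsum_nonneg_on_newton_poly[OF _ assms(2)] by (auto intro!: bdd_belowI)
  with assms show ?thesis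
    by (auto simp: Delta_def dval_def intro: cInf_lower)
qed

lemma Delta_combination:
  assumes "y \<in> Delta X g" "y \<in> Delta Y g" "strictly_pos X" "strictly_pos Y"
    and "0 \<le> a" "0 \<le> b"
  shows "y \<in> Delta (a *\<^sub>R X + b *\<^sub>R Y) g"
proof -
  have y: "y \<in> newton_poly g"
    using assms(1) by (simp add: Delta_def)
  have "wsum (a *\<^sub>R X + b *\<^sub>R Y) y \<le> wsum (a *\<^sub>R X + b *\<^sub>R Y) x" if "x \<in> newton_poly g" for x
    using Delta_minimal[OF assms(1,3) that] Delta_minimal[OF assms(2,4) that] assms(5,6)
    by (simp add: wsum_eq_inner inner_add_left add_mono mult_left_mono)
  then have "dval (a *\<^sub>R X + b *\<^sub>R Y) g = wsum (a *\<^sub>R X + b *\<^sub>R Y) y"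
    unfolding dval_def using y by (intro cInf_eq_minimum) auto
  with y show ?thesis
    by (simp add: Delta_def)
qed

lemma Delta_scaleR:
  assumes "y \<in> Delta X g" "strictly_pos X" "0 \<le> a"
  shows "y \<in> Delta (a *\<^sub>R X) g"
  using Delta_combination[OF assms(1,1,2,2,3) order_refl] by simp

lemma wsum_pos_on_newton_poly:
  assumes "f 0 = 0" "strictly_pos P" "x \<in> newton_poly f"
  shows "0 < wsum P x"
proof -
  have "newton_poly f \<subseteq> {x. P \<bullet> x > 0}"
    unfolding newton_poly_def
  proof (rule hull_minimal)
    show "convex {x. P \<bullet> x > 0}"
      by (rule convex_halfspace_gt)
  next
    show "(\<Union>\<nu>\<in>ps_support f. {x. \<forall>k. real (\<nu> $ k) \<le> x $ k}) \<subseteq> {x. P \<bullet> x > 0}"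
    proof safe
    fix \<nu> and x :: "real ^ 'a"
    assume \<nu>: "\<nu> \<in> ps_support f" and x: "\<forall>k. real (\<nu> $ k) \<le> x $ k"
    then have "\<nu> \<noteq> 0"
      using assms(1) by (auto simp: ps_support_def)
    then obtain k where k: "\<nu> $ k \<noteq> 0"
      by (metis vec_eq_iff zero_index)
    have P: "\<And>l. 0 < P $ l"
      using assms(2) by (simp add: strictly_pos_def)
    have "0 < P $ k * x $ k"
      using P[of k] x[rule_format, of k] k by simp
    also have "\<dots> \<le> (\<Sum>l\<in>UNIV. P $ l * x $ l)"
    proof (rule member_le_sum)
      show "0 \<le> P $ l * x $ l" for l
        using P[of l] x[rule_format, of l] by (simp add: order_trans[OF of_nat_0_le_iff])
    qed simp_all
    finally show "P \<bullet> x > 0"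
      by (simp add: inner_vec_def)
    qed
  qed
  with assms(3) show ?thesis
    by (auto simp: wsum_eq_inner)
qed

lemma dval_pos:
  assumes "f 0 = 0" "strictly_pos P" "y \<in> Delta P f"
  shows "0 < dval P f"
proof -
  from assms(3) have "y \<in> newton_poly f" "dval P f = wsum P y"
    by (auto simp: Delta_def)
  then show ?thesis
    using wsum_pos_on_newton_poly[where f = f and P = P, OF assms(1,2)] by simp
qed

lemma strictly_pos_normw:
  assumes "strictly_pos P" "0 < dval P f"
  shows "strictly_pos (normw P f)"
  using assms by (simp add: strictly_pos_def normw_def)

lemma Delta_normw:
  assumes "y \<in> Delta X g" "strictly_pos X" "0 < dval X f"
  shows "y \<in> Delta (normw X f) g"
  using Delta_scaleR[OF assms(1,2)] assms(3) by (simp add: normw_def)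

lemma mediant_le_max:
  fixes a b c d s :: real
  assumes "0 < c" "0 < d" "0 \<le> s" "s \<le> 1"
  shows "(s * a + (1 - s) * b) / (s * c + (1 - s) * d) \<le> max (a / c) (b / d)"
proof -
  define m where "m = max (a / c) (b / d)"
  have "a \<le> m * c" "b \<le> m * d"
    using assms(1,2) by (simp_all add: m_def pos_divide_le_eq[symmetric])
  then have "s * a + (1 - s) * b \<le> m * (s * c + (1 - s) * d)"
    using assms(3,4) mult_left_mono[of a "m * c" s] mult_left_mono[of b "m * d" "1 - s"]
    by (simp add: algebra_simps)
  moreover have "0 < s * c + (1 - s) * d"
    using assms by (cases "s = 0") (auto intro: add_pos_nonneg)
  ultimately show ?thesis
    by (simp add: m_def pos_divide_le_eq)
qed

lemma eta_ij_combination_le: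
  assumes "strictly_pos X" "strictly_pos Y" "0 \<le> s" "s \<le> 1"
  shows "eta_ij (s *\<^sub>R X + (1 - s) *\<^sub>R Y) i j \<le> max (eta_ij X i j) (eta_ij Y i j)"
proof -
  have "eta_ij (s *\<^sub>R X + (1 - s) *\<^sub>R Y) i j
      = (s * (1 - X $ j) + (1 - s) * (1 - Y $ j)) / (s * X $ i + (1 - s) * Y $ i)"
    by (simp add: eta_ij_def algebra_simps)
  also have "\<dots> \<le> max (eta_ij X i j) (eta_ij Y i j)"
    using assms unfolding eta_ij_def strictly_pos_def by (intro mediant_le_max) auto
  finally show ?thesis .
qed

lemma eta_attained: "\<exists>k. eta X = 1 / X $ k - 1"
proof -
  have "Min (range (\<lambda>k. X $ k)) \<in> range (\<lambda>k. X $ k)"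
    by (intro Min_in) auto
  then obtain k where "Min (range (\<lambda>k. X $ k)) = X $ k"
    by blast
  then show ?thesis
    by (auto simp: eta_def)
qed

lemma eta_ge:
  assumes "strictly_pos X"
  shows "1 / X $ k - 1 \<le> eta X"
proof -
  have "Min (range (\<lambda>k. X $ k)) \<in> range (\<lambda>k. X $ k)"
    by (intro Min_in) auto
  then have "0 < Min (range (\<lambda>k. X $ k))"
    using assms by (auto simp: strictly_pos_def)
  then show ?thesis
    by (simp add: eta_def divide_left_mono)
qed

lemma eta_combination_le:
  assumes "strictly_pos X" "strictly_pos Y" "0 \<le> s" "s \<le> 1"
  shows "eta (s *\<^sub>R X + (1 - s) *\<^sub>R Y) \<le> max (eta X) (eta Y)"
proof -
  obtain k where k: "eta (s *\<^sub>R X + (1 - s) *\<^sub>R Y) = 1 / (s * X $ k + (1 - s) * Y $ k) - 1"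
    using eta_attained[of "s *\<^sub>R X + (1 - s) *\<^sub>R Y"] by auto
  have "1 / (s * X $ k + (1 - s) * Y $ k) = (s * 1 + (1 - s) * 1) / (s * X $ k + (1 - s) * Y $ k)"
    by simp
  also have "\<dots> \<le> max (1 / X $ k) (1 / Y $ k)"
    using assms unfolding strictly_pos_def by (intro mediant_le_max) auto
  finally show ?thesis
    using k eta_ge[OF assms(1), of k] eta_ge[OF assms(2), of k] by linarith
qed

lemma eta'_ij_combination_le:
  assumes "y \<in> Delta X (ps_partial c j)" "y \<in> Delta Y (ps_partial c j)"
    and "strictly_pos X" "strictly_pos Y" "0 \<le> s" "s \<le> 1"
  shows "eta'_ij c (s *\<^sub>R X + (1 - s) *\<^sub>R Y) i j \<le> max (eta'_ij c X i j) (eta'_ij c Y i j)"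
proof -
  have "dval (s *\<^sub>R X + (1 - s) *\<^sub>R Y) (ps_partial c j) = s * wsum X y + (1 - s) * wsum Y y"
    using Delta_combination[OF assms(1-5), of "1 - s"] assms(6)
    by (simp add: Delta_def wsum_eq_inner inner_add_left)
  then have "eta'_ij c (s *\<^sub>R X + (1 - s) *\<^sub>R Y) i j
      = (s * dval X (ps_partial c j) + (1 - s) * dval Y (ps_partial c j)) / (s * X $ i + (1 - s) * Y $ i)"
    using assms(1,2) by (simp add: eta'_ij_def Delta_def)
  also have "\<dots> \<le> max (eta'_ij c X i j) (eta'_ij c Y i j)"
    using assms unfolding eta'_ij_def strictly_pos_def by (intro mediant_le_max) auto
  finally show ?thesis .
qed

theorem lemma13:
  fixes f :: "'n::finite pseries" and P Q :: "real ^ 'n"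
  assumes "convergent_ps f"
    and "f 0 = 0"
    and "strictly_pos P" and "strictly_pos Q"
  defines "R \<equiv> (\<lambda>s::real. s *\<^sub>R normw P f + (1 - s) *\<^sub>R normw Q f)"
  shows "(admissible f P Q \<longrightarrow>
           (\<forall>i j s. 0 < s \<and> s < 1 \<longrightarrow>
              eta_ij (R s) i j \<le> max (eta_ij (normw P f) i j) (eta_ij (normw Q f) i j)) \<and>
           (\<forall>s. 0 < s \<and> s < 1 \<longrightarrow>
              eta (R s) \<le> max (eta (normw P f)) (eta (normw Q f))))
       \<and> (J_admissible f P Q \<longrightarrow>
           (\<forall>i j s. 0 < s \<and> s < 1 \<longrightarrow>
              eta'_ij f (R s) i j \<le> max (eta'_ij f (normw P f) i j) (eta'_ij f (normw Q f) i j)))"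
proof -
  have dval_PQ: "0 < dval P f \<and> 0 < dval Q f" if "admissible f P Q"
    using that dval_pos[where f = f, OF assms(2,3)] dval_pos[where f = f, OF assms(2,4)]
    by (auto simp: admissible_def)
  have eta'_part: "eta'_ij f (R s) i j \<le> max (eta'_ij f (normw P f) i j) (eta'_ij f (normw Q f) i j)"
    if J: "J_admissible f P Q" and s: "0 < s" "s < 1" for i j s
  proof -
    obtain y where "y \<in> Delta P (ps_partial f j)" "y \<in> Delta Q (ps_partial f j)"
      using J unfolding J_admissible_def by blast
    with J s show ?thesis
      unfolding R_def using assms(3,4) dval_PQ
      by (intro eta'_ij_combination_le Delta_normw strictly_pos_normw) (auto simp: J_admissible_def)
  qed
  show ?thesis
    using assms(3,4) dval_PQ eta'_part
    by (auto simp: R_def intro!: eta_ij_combination_le eta_combination_le strictly_pos_normw)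
qed

end
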